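(* Fix $c_0>0$, $\alpha_0\in(0,1/2)$, $\nu_2>0$ and $\sigma_1>0$. For every $t>0$ and every $\theta\in(-c_0,c_0)$, $$\omega\{\theta,\sigma_1,\nu_2,t,c(t,\nu_2)\}\;\le\;\omega\{\theta,\sigma_1,\nu_2,0,c(0)\}.$$ That is, among all tests with rejection region $\{t\widehat\sigma_1-c<\widehat\theta<c-t\widehat\sigma_1\}$ whose size (rejection probability at $\theta=c_0$) equals $\alpha_0$, the one with $t=0$ (rejection region $|\widehat\theta|<c(0)$) has the largest power at every $\theta\in(-c_0,c_0)$.
   Context: Univariate setting. Let $\sigma_1>0$, $\nu_2>0$. For $\theta\in\mathbb R$, $s>0$, $t\ge 0$, $c>0$, define the rejection probability $$\omega(\theta,s,\nu_2,t,c)=\Pr\big(t\widehat\sigma_1-c<\widehat\theta<c-t\widehat\sigma_1\big),$$ computed when $\widehat\theta\sim\mathcal N(\theta,s^2)$ and $\widehat\sigma_1>0$ are independent with $\nu_2\widehat\sigma_1^2/s^2\sim\chi^2_{\nu_2}$. In particular $\omega(\theta,s,\nu_2,0,c)=\Phi\big((c-\theta)/s\big)-\Phi\big((-c-\theta)/s\big)$, with $\Phi$ the standard normal CDF. For each fixed $t\ge0$, the map $c\mapsto\omega(c_0,s,\nu_2,t,c)$ is strictly increasing on $(0,\infty)$, tends to $0$ as $c\to0$ and to $1$ as $c\to\infty$. Denote by $c(t,\nu_2)$ the unique $c>0$ with $\omega(c_0,\sigma_1,\nu_2,t,c)=\alpha_0$, and write $c(0)=c(0,\nu_2)$ for the case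 $t=0$. *)

theory Defs
  imports "HOL-Probability.Probability"
begin

definition chi2_density :: "real \<Rightarrow> real \<Rightarrow> real" where
  "chi2_density nu w =
     (if w > 0 then w powr (nu / 2 - 1) * exp (- w / 2) / (2 powr (nu / 2) * Gamma (nu / 2))
      else 0)"

text \<open>Rejection probability omega(theta, s, nu, t, c) = Pr(t*sh - c < th < c - t*sh), where
  th ~ N(theta, s^2) and W = nu * sh^2 / s^2 ~ chi^2_nu are independent, i.e.
  sh = s * sqrt (W / nu).\<close>
definition omega :: "real \<Rightarrow> real \<Rightarrow> real \<Rightarrow> real \<Rightarrow> real \<Rightarrow> real" where
  "omega theta s nu t c =
     measure (density (lborel \<Otimes>\<^sub>M lborel)
                (\<lambda>(x, w). ennreal (normal_density theta s x * chi2_density nu w)))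
       {(x, w). w > 0 \<and> t * (s * sqrt (w / nu)) - c < x \<and> x < c - t * (s * sqrt (w / nu))}"

definition crit :: "real \<Rightarrow> real \<Rightarrow> real \<Rightarrow> real \<Rightarrow> real \<Rightarrow> real" where
  "crit c0 sigma1 alpha0 nu2 t = (THE c. c > 0 \<and> omega c0 sigma1 nu2 t c = alpha0)"

end

theory Submission
  imports Defs
begin

text \<open>Conditionally on the scale estimate \<open>\<sigma>\<close>, the test with parameter \<open>t\<close> rejects when the
  estimate \<open>\<theta>'\<close> satisfies \<open>|\<theta>'| < a\<close> with half-width \<open>a = c - t\<sigma>\<close>; so \<open>\<omega>\<close> is an average of
  \<open>G\<^sub>\<theta>(a) = P\<^sub>\<theta>(|\<theta>'| < a)\<close>. The density of \<open>|\<theta>'|\<close> is proportional to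
  \<open>exp(-x\<^sup>2/2s\<^sup>2) cosh(x\<theta>/s\<^sup>2)\<close>, and for \<open>|\<theta>| \<le> c\<^sub>0\<close> its ratio to the density under \<open>c\<^sub>0\<close>
  decreases in \<open>x\<close>. As in the Neyman-Pearson lemma, with \<open>a\<^sub>0 = c(0)\<close> and \<open>k\<close> that ratio at
  \<open>a\<^sub>0\<close>, the function \<open>a \<mapsto> G\<^sub>\<theta>(a) - k G\<^sub>c\<^sub>0(a)\<close> is maximal at \<open>a\<^sub>0\<close>. Averaging over \<open>\<sigma>\<close> and
  using that both tests have size \<open>\<alpha>\<^sub>0\<close> gives \<open>\<omega>\<^sub>t(\<theta>) - k\<alpha>\<^sub>0 \<le> G\<^sub>\<theta>(a\<^sub>0) - k\<alpha>\<^sub>0 = \<omega>\<^sub>0(\<theta>) - k\<alpha>\<^sub>0\<close>.\<close>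

section \<open>The normal and chi-squared laws\<close>

lemma chi2_density_nonneg: "nu > 0 \<Longrightarrow> chi2_density nu w \<ge> 0"
  unfolding chi2_density_def by (auto intro!: divide_nonneg_pos Gamma_real_pos)

lemma chi2_density_pos: "nu > 0 \<Longrightarrow> w > 0 \<Longrightarrow> chi2_density nu w > 0"
  unfolding chi2_density_def by (auto intro!: divide_pos_pos mult_pos_pos Gamma_real_pos)

lemma borel_measurable_chi2_density[measurable]: "chi2_density nu \<in> borel_measurable borel"
  unfolding chi2_density_def[abs_def] by measurable

lemma chi2_density_scaled:
  assumes "nu > 0"
  shows "chi2_density nu (2 * x) =
    indicator {0..} x * x powr (nu / 2 - 1) / exp x * (1 / (2 * Gamma (nu / 2)))"
proof (cases "x > 0")
  case True
  have p: "(2 * x) powr (nu / 2 - 1) = 2 powr (nu / 2) / 2 * x powr (nu / 2 - 1)"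
    using True by (simp add: powr_mult powr_diff)
  have e: "exp (- (2 * x) / 2) = 1 / exp x"
    by (simp add: exp_minus field_simps)
  have "chi2_density nu (2 * x) = (2 * x) powr (nu / 2 - 1) * exp (- (2 * x) / 2)
                                    / (2 powr (nu / 2) * Gamma (nu / 2))"
    using True by (simp add: chi2_density_def)
  also have "\<dots> = x powr (nu / 2 - 1) / exp x * (1 / (2 * Gamma (nu / 2)))"
    unfolding p e using assms Gamma_real_pos[of "nu / 2"] by (simp add: field_simps powr_diff)
  finally show ?thesis using True by simp
qed (auto simp: chi2_density_def indicator_def)

text \<open>Substituting \<open>w = 2x\<close> turns the chi-squared integral into Euler's integral for \<open>\<Gamma>(\<nu>/2)\<close>.\<close>
lemma nn_integral_chi2_density:
  assumes nu: "nu > 0"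
  shows "(\<integral>\<^sup>+w. ennreal (chi2_density nu w) \<partial>lborel) = 1"
proof -
  have G: "Gamma (nu / 2) > 0" using nu by (simp add: Gamma_real_pos)
  have "(\<integral>\<^sup>+w. ennreal (chi2_density nu w) \<partial>lborel)
      = 2 * (\<integral>\<^sup>+x. ennreal (chi2_density nu (0 + 2 * x)) \<partial>lborel)"
    by (subst nn_integral_real_affine[where c=2 and t=0]) auto
  also have "\<dots> = 2 * (\<integral>\<^sup>+x. ennreal (indicator {0..} x * x powr (nu / 2 - 1) / exp x)
                       * ennreal (1 / (2 * Gamma (nu / 2))) \<partial>lborel)"
    using G by (intro arg_cong2[where f="(*)"] refl nn_integral_cong)
      (simp add: chi2_density_scaled[OF nu] flip: ennreal_mult)
  also have "\<dots> = 2 * ((\<integral>\<^sup>+x. ennreal (indicator {0..} x * x powr (nu / 2 - 1) / exp x) \<partial>lborel)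
                       * ennreal (1 / (2 * Gamma (nu / 2))))"
    by (simp add: nn_integral_multc)
  also have "\<dots> = 2 * (ennreal (Gamma (nu / 2)) * ennreal (1 / (2 * Gamma (nu / 2))))"
    using nu by (simp add: Gamma_conv_nn_integral_real)
  also have "\<dots> = ennreal 2 * ennreal (1 / 2)"
    using G by (simp add: ennreal_mult[symmetric])
  also have "\<dots> = ennreal (2 * (1 / 2))"
    by (rule ennreal_mult[symmetric]) simp_all
  also have "\<dots> = 1" by simp
  finally show ?thesis .
qed

definition normal_measure :: "real \<Rightarrow> real \<Rightarrow> real measure" where
  "normal_measure mu s = density lborel (\<lambda>x. ennreal (normal_density mu s x))"

definition chi2_measure :: "real \<Rightarrow> real measure" where
  "chi2_measure nu = density lborel (\<lambda>w. ennreal (chi2_density nu w))"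

lemma sets_normal_measure[simp, measurable_cong]: "sets (normal_measure mu s) = sets borel"
  by (simp add: normal_measure_def)

lemma sets_chi2_measure[simp, measurable_cong]: "sets (chi2_measure nu) = sets borel"
  by (simp add: chi2_measure_def)

lemma space_normal_measure[simp]: "space (normal_measure mu s) = UNIV"
  by (simp add: normal_measure_def)

lemma space_chi2_measure[simp]: "space (chi2_measure nu) = UNIV"
  by (simp add: chi2_measure_def)

lemma prob_space_normal_measure: "s > 0 \<Longrightarrow> prob_space (normal_measure mu s)"
  unfolding normal_measure_def by (rule prob_space_normal_density) simp

lemma prob_space_chi2_measure: "nu > 0 \<Longrightarrow> prob_space (chi2_measure nu)"
  unfolding chi2_measure_def
  by (rule prob_spaceI) (simp add: emeasure_density nn_integral_chi2_density)

lemma emeasure_chi2_measure_nonpos: "emeasure (chi2_measure nu) {..0} = 0"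
proof -
  have "emeasure (chi2_measure nu) {..0}
      = (\<integral>\<^sup>+w. ennreal (chi2_density nu w) * indicator {..0} w \<partial>lborel)"
    unfolding chi2_measure_def by (rule emeasure_density) auto
  also have "\<dots> = (\<integral>\<^sup>+(w::real). 0 \<partial>lborel)"
    by (rule nn_integral_cong) (auto simp: chi2_density_def indicator_def)
  finally show ?thesis by simp
qed

lemma prob_chi2_measure_pos: "nu > 0 \<Longrightarrow> measure (chi2_measure nu) {0<..} = 1"
proof -
  assume "nu > 0"
  then interpret prob_space "chi2_measure nu" by (rule prob_space_chi2_measure)
  have "measure (chi2_measure nu) (space (chi2_measure nu) - {..0}) = 1 - measure (chi2_measure nu) {..0}"
    by (rule prob_compl) simp
  moreover have "space (chi2_measure nu) - {..0} = {0<..}" by auto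
  ultimately show ?thesis
    using emeasure_chi2_measure_nonpos by (simp add: measure_def)
qed

lemma emeasure_chi2_measure_interval_pos:
  assumes nu: "nu > 0" and "d > 0"
  shows "emeasure (chi2_measure nu) {0<..<d} \<noteq> 0"
proof
  assume "emeasure (chi2_measure nu) {0<..<d} = 0"
  moreover have "emeasure (chi2_measure nu) {0<..<d}
      = (\<integral>\<^sup>+w. ennreal (chi2_density nu w) * indicator {0<..<d} w \<partial>lborel)"
    unfolding chi2_measure_def by (rule emeasure_density) auto
  ultimately have "AE w in lborel. ennreal (chi2_density nu w) * indicator {0<..<d} w = 0"
    by (simp add: nn_integral_0_iff_AE)
  then have "AE w in lborel. w \<notin> {0<..<d}"
    by eventually_elim (use chi2_density_pos[OF nu] in \<open>force simp: indicator_def\<close>)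
  then have "emeasure lborel {0<..<d} = 0"
    by (subst (asm) AE_iff_measurable[where N="{0<..<d}"]) auto
  then show False using \<open>d > 0\<close> by simp
qed

section \<open>The probability of a centred interval\<close>

definition central_prob :: "real \<Rightarrow> real \<Rightarrow> real \<Rightarrow> real" where
  "central_prob mu s a = measure (normal_measure mu s) {-a<..<a}"

lemma central_prob_nonpos: "a \<le> 0 \<Longrightarrow> central_prob mu s a = 0"
  unfolding central_prob_def by simp

lemma central_prob_bounds:
  assumes "s > 0"
  shows "0 \<le> central_prob mu s a" and "central_prob mu s a \<le> 1"
proof -
  interpret prob_space "normal_measure mu s" by (rule prob_space_normal_measure[OF assms])
  show "0 \<le> central_prob mu s a" "central_prob mu s a \<le> 1"
    unfolding central_prob_def by auto
qed

lemma mono_central_prob: "s > 0 \<Longrightarrow> mono (central_prob mu s)"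
proof (rule monoI)
  fix a b :: real
  assume "s > 0" "a \<le> b"
  then interpret prob_space "normal_measure mu s" by (intro prob_space_normal_measure)
  show "central_prob mu s a \<le> central_prob mu s b"
    unfolding central_prob_def by (rule finite_measure_mono) (use \<open>a \<le> b\<close> in auto)
qed

lemma borel_measurable_central_prob[measurable]:
  "s > 0 \<Longrightarrow> central_prob mu s \<in> borel_measurable borel"
  by (rule borel_measurable_mono[OF mono_central_prob])

lemma integrable_normal_density_indicator:
  "s > 0 \<Longrightarrow> A \<in> sets borel \<Longrightarrow> integrable lborel (\<lambda>x. normal_density mu s x * indicator A x)"
  by (rule integrable_real_mult_indicator) auto

lemma central_prob_eq_integral:
  assumes "s > 0"
  shows "central_prob mu s a = (\<integral>x. normal_density mu s x * indicator {-a<..<a} x \<partial>lborel)"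
proof -
  have "central_prob mu s a = integral\<^sup>L (normal_measure mu s) (indicator {-a<..<a})"
    by (simp add: central_prob_def)
  also have "\<dots> = (\<integral>x. normal_density mu s x *\<^sub>R indicator {-a<..<a} x \<partial>lborel)"
    unfolding normal_measure_def by (rule integral_density) (use assms in auto)
  finally show ?thesis by simp
qed

lemma central_prob_diff_eq_integral:
  assumes "s > 0"
  shows "central_prob mu s b - central_prob mu s a
    = (\<integral>x. normal_density mu s x * (indicator {-b<..<b} x - indicator {-a<..<a} x) \<partial>lborel)"
  unfolding central_prob_eq_integral[OF assms] right_diff_distrib
  by (rule Bochner_Integration.integral_diff[symmetric])
    (auto intro: integrable_normal_density_indicator assms)

lemma normal_density_reflect: "normal_density mu s (- x) = normal_density (- mu) s x"
  unfolding normal_density_def by (simp add: power2_eq_square algebra_simps)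

lemma central_prob_reflect:
  assumes "s > 0"
  shows "central_prob (- mu) s a = central_prob mu s a"
proof -
  have ind: "indicator {-a<..<a} (- x) = (indicator {-a<..<a} x :: real)" for x
    by (auto simp: indicator_def)
  have "central_prob mu s a = \<bar>- 1\<bar> *\<^sub>R (\<integral>x. normal_density mu s (0 + - 1 * x)
                                    * indicator {-a<..<a} (0 + - 1 * x) \<partial>lborel)"
    unfolding central_prob_eq_integral[OF assms] by (rule lborel_integral_real_affine) simp
  also have "\<dots> = central_prob (- mu) s a"
    unfolding central_prob_eq_integral[OF assms] by (simp add: normal_density_reflect ind)
  finally show ?thesis by simp
qed

lemma normal_density_le: "s > 0 \<Longrightarrow> normal_density mu s x \<le> 1 / sqrt (2 * pi * s\<^sup>2)"
  unfolding normal_density_def by (rule mult_left_le) auto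

lemma central_prob_lipschitz_nonneg:
  assumes s: "s > 0" and "0 \<le> a" "a \<le> b"
  shows "central_prob mu s b - central_prob mu s a \<le> 2 / sqrt (2 * pi * s\<^sup>2) * (b - a)"
proof -
  define K where "K = 1 / sqrt (2 * pi * s\<^sup>2)"
  define D where "D x = indicator {-b<..<b} x - (indicator {-a<..<a} x :: real)" for x
  have D: "0 \<le> D x" for x
    using \<open>a \<le> b\<close> by (auto simp: D_def indicator_def)
  have int_D: "integrable lborel D"
    unfolding D_def using assms by (intro Bochner_Integration.integrable_diff integrable_real_indicator) auto
  have "central_prob mu s b - central_prob mu s a \<le> (\<integral>x. K * D x \<partial>lborel)"
    unfolding central_prob_diff_eq_integral[OF s] D_def[symmetric]
  proof (rule integral_mono)
    show "integrable lborel (\<lambda>x. normal_density mu s x * D x)"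
      unfolding D_def right_diff_distrib
      by (intro Bochner_Integration.integrable_diff integrable_normal_density_indicator s) auto
    show "normal_density mu s x * D x \<le> K * D x" for x
      using normal_density_le[OF s] D unfolding K_def by (intro mult_right_mono)
  qed (use int_D in simp)
  also have "\<dots> = K * (2 * b - 2 * a)"
    using int_D assms by (simp add: D_def Bochner_Integration.integral_diff integrable_real_indicator)
  finally show ?thesis unfolding K_def by simp
qed

lemma central_prob_lipschitz:
  assumes s: "s > 0" and "a \<le> b"
  shows "central_prob mu s b - central_prob mu s a \<le> 2 / sqrt (2 * pi * s\<^sup>2) * (b - a)"
proof (cases "b \<le> 0")
  case True
  then show ?thesis using assms by (simp add: central_prob_nonpos)
next
  case False
  have "central_prob mu s b - central_prob mu s (max a 0) \<le> 2 / sqrt (2 * pi * s\<^sup>2) * (b - max a 0)"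
    using False assms by (intro central_prob_lipschitz_nonneg[OF s]) auto
  also have "\<dots> \<le> 2 / sqrt (2 * pi * s\<^sup>2) * (b - a)"
    using assms by (intro mult_left_mono) auto
  finally show ?thesis by (cases "a \<le> 0") (auto simp: central_prob_nonpos max_def)
qed

lemma central_prob_strict_mono:
  assumes s: "s > 0" and "0 \<le> a" "a < b"
  shows "central_prob mu s a < central_prob mu s b"
proof -
  define m where "m = 1 / sqrt (2 * pi * s\<^sup>2) * exp (- (b + \<bar>mu\<bar>)\<^sup>2 / (2 * s\<^sup>2))"
  have "(\<integral>x. m * indicator {a<..<b} x \<partial>lborel) \<le> central_prob mu s b - central_prob mu s a"
    unfolding central_prob_diff_eq_integral[OF s]
  proof (rule integral_mono)
    show "integrable lborel (\<lambda>x. normal_density mu s x * (indicator {-b<..<b} x - indicator {-a<..<a} x))"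
      unfolding right_diff_distrib
      by (intro Bochner_Integration.integrable_diff integrable_normal_density_indicator s) auto
    fix x :: real
    show "m * indicator {a<..<b} x
        \<le> normal_density mu s x * (indicator {-b<..<b} x - indicator {-a<..<a} x)"
    proof (cases "x \<in> {a<..<b}")
      case True
      have "\<bar>x - mu\<bar> \<le> b + \<bar>mu\<bar>" using True assms by auto
      then have "(x - mu)\<^sup>2 \<le> (b + \<bar>mu\<bar>)\<^sup>2"
        by (metis abs_ge_zero power2_abs power_mono)
      then have "m \<le> normal_density mu s x"
        unfolding m_def normal_density_def using s by (simp add: divide_right_mono)
      then show ?thesis using True assms by (auto simp: indicator_def)
    next
      case False
      then show ?thesis
        using assms by (auto simp: indicator_def intro!: normal_density_nonneg)
    qed
  qed (use assms in simp)
  moreover have "(\<integral>x. m * indicator {a<..<b} x \<partial>lborel) = m * (b - a)"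
    using assms by simp
  moreover have "m * (b - a) > 0"
    using assms unfolding m_def by simp
  ultimately show ?thesis by linarith
qed

section \<open>Conditioning on the scale estimate\<close>

definition rejection_region :: "real \<Rightarrow> real \<Rightarrow> real \<Rightarrow> real \<Rightarrow> (real \<times> real) set" where
  "rejection_region s nu t c =
     {(x, w). w > 0 \<and> t * (s * sqrt (w / nu)) - c < x \<and> x < c - t * (s * sqrt (w / nu))}"

definition cond_rejection_prob :: "real \<Rightarrow> real \<Rightarrow> real \<Rightarrow> real \<Rightarrow> real \<Rightarrow> real \<Rightarrow> real" where
  "cond_rejection_prob mu s nu t c w =
     (if w > 0 then central_prob mu s (c - t * (s * sqrt (w / nu))) else 0)"

lemma rejection_region_mono: "c1 \<le> c2 \<Longrightarrow> rejection_region s nu t c1 \<subseteq> rejection_region s nu t c2"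
  unfolding rejection_region_def by auto

lemma rejection_region_sets[measurable]: "rejection_region s nu t c \<in> sets (borel \<Otimes>\<^sub>M borel)"
proof -
  have "rejection_region s nu t c = {z \<in> space (borel \<Otimes>\<^sub>M borel). snd z > 0 \<and>
          t * (s * sqrt (snd z / nu)) - c < fst z \<and> fst z < c - t * (s * sqrt (snd z / nu))}"
    by (auto simp: rejection_region_def space_pair_measure)
  also have "\<dots> \<in> sets (borel \<Otimes>\<^sub>M borel)" by measurable
  finally show ?thesis .
qed

lemma sets_normal_chi2_pair: "sets (normal_measure mu s \<Otimes>\<^sub>M chi2_measure nu) = sets (borel \<Otimes>\<^sub>M borel)"
  by (rule sets_pair_measure_cong) simp_all

lemma borel_measurable_cond_rejection_prob[measurable]:
  "s > 0 \<Longrightarrow> cond_rejection_prob mu s nu t c \<in> borel_measurable borel"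
  unfolding cond_rejection_prob_def[abs_def] by measurable

lemma cond_rejection_prob_bounds:
  assumes "s > 0"
  shows "0 \<le> cond_rejection_prob mu s nu t c w" and "cond_rejection_prob mu s nu t c w \<le> 1"
  unfolding cond_rejection_prob_def using central_prob_bounds[OF assms] by auto

lemma integrable_cond_rejection_prob:
  assumes nu: "nu > 0" and s: "s > 0"
  shows "integrable (chi2_measure nu) (cond_rejection_prob mu s nu t c)"
proof -
  interpret prob_space "chi2_measure nu" by (rule prob_space_chi2_measure[OF nu])
  show ?thesis
    using cond_rejection_prob_bounds[OF s]
    by (intro integrable_const_bound[where B=1]) (use s in auto)
qed

lemma omega_eq_pair_measure:
  assumes nu: "nu > 0"
  shows "omega mu s nu t c
    = measure (normal_measure mu s \<Otimes>\<^sub>M chi2_measure nu) (rejection_region s nu t c)"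
proof -
  interpret C: prob_space "chi2_measure nu" by (rule prob_space_chi2_measure[OF nu])
  have "density (lborel \<Otimes>\<^sub>M lborel) (\<lambda>(x, w). ennreal (normal_density mu s x * chi2_density nu w))
     = density (lborel \<Otimes>\<^sub>M lborel) (\<lambda>(x, w). ennreal (normal_density mu s x) * ennreal (chi2_density nu w))"
    by (intro density_cong) (auto simp: ennreal_mult chi2_density_nonneg[OF nu] space_pair_measure)
  also have "\<dots> = normal_measure mu s \<Otimes>\<^sub>M chi2_measure nu"
    unfolding normal_measure_def chi2_measure_def
    using C.sigma_finite_measure_axioms unfolding chi2_measure_def
    by (intro pair_measure_density[symmetric]) (auto intro: lborel.sigma_finite_measure_axioms)
  finally show ?thesis unfolding omega_def rejection_region_def by simp
qed

text \<open>Fubini: integrate out \<open>x\<close> first; the section of the region at \<open>w > 0\<close> is a centred interval.\<close>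
lemma omega_eq_integral:
  assumes nu: "nu > 0" and s: "s > 0"
  shows "omega mu s nu t c = (\<integral>w. cond_rejection_prob mu s nu t c w \<partial>chi2_measure nu)"
proof -
  interpret N: prob_space "normal_measure mu s" by (rule prob_space_normal_measure[OF s])
  interpret C: prob_space "chi2_measure nu" by (rule prob_space_chi2_measure[OF nu])
  interpret P: pair_sigma_finite "normal_measure mu s" "chi2_measure nu" ..
  have R: "rejection_region s nu t c \<in> sets (normal_measure mu s \<Otimes>\<^sub>M chi2_measure nu)"
    unfolding sets_normal_chi2_pair by (rule rejection_region_sets)
  have slice: "emeasure (normal_measure mu s) ((\<lambda>x. (x, w)) -` rejection_region s nu t c)
               = ennreal (cond_rejection_prob mu s nu t c w)" for w
  proof (cases "w > 0")
    case True
    then have "(\<lambda>x. (x, w)) -` rejection_region s nu t c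
             = {- (c - t * (s * sqrt (w / nu)))<..<c - t * (s * sqrt (w / nu))}"
      by (auto simp: rejection_region_def)
    then show ?thesis
      using True by (simp add: cond_rejection_prob_def central_prob_def N.emeasure_eq_measure)
  next
    case False
    then have "(\<lambda>x. (x, w)) -` rejection_region s nu t c = {}"
      by (auto simp: rejection_region_def)
    then show ?thesis using False by (simp add: cond_rejection_prob_def)
  qed
  have "emeasure (normal_measure mu s \<Otimes>\<^sub>M chi2_measure nu) (rejection_region s nu t c)
      = (\<integral>\<^sup>+w. ennreal (cond_rejection_prob mu s nu t c w) \<partial>chi2_measure nu)"
    using P.emeasure_pair_measure_alt2[OF R] slice by simp
  also have "\<dots> = ennreal (\<integral>w. cond_rejection_prob mu s nu t c w \<partial>chi2_measure nu)"
    by (rule nn_integral_eq_integral[OF integrable_cond_rejection_prob[OF nu s]])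
      (simp add: cond_rejection_prob_bounds[OF s])
  finally show ?thesis
    unfolding omega_eq_pair_measure[OF nu] measure_def
    by (simp add: Bochner_Integration.integral_nonneg cond_rejection_prob_bounds[OF s])
qed

lemma omega_zero_scale:
  assumes nu: "nu > 0" and s: "s > 0"
  shows "omega mu s nu 0 c = central_prob mu s c"
proof -
  have "omega mu s nu 0 c = (\<integral>w. central_prob mu s c * indicator {0<..} w \<partial>chi2_measure nu)"
    unfolding omega_eq_integral[OF nu s]
    by (rule Bochner_Integration.integral_cong) (auto simp: cond_rejection_prob_def indicator_def)
  then show ?thesis using prob_chi2_measure_pos[OF nu] by simp
qed

section \<open>The critical value\<close>

lemma cond_rejection_prob_mono:
  "s > 0 \<Longrightarrow> c1 \<le> c2 \<Longrightarrow> cond_rejection_prob mu s nu t c1 w \<le> cond_rejection_prob mu s nu t c2 w"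
  unfolding cond_rejection_prob_def by (auto intro!: monoD[OF mono_central_prob])

lemma cond_rejection_prob_lipschitz:
  assumes "s > 0" and "c1 \<le> c2"
  shows "cond_rejection_prob mu s nu t c2 w - cond_rejection_prob mu s nu t c1 w
           \<le> 2 / sqrt (2 * pi * s\<^sup>2) * (c2 - c1)"
  using assms central_prob_lipschitz[OF assms(1), of "c1 - t * (s * sqrt (w / nu))" "c2 - t * (s * sqrt (w / nu))"]
  by (auto simp: cond_rejection_prob_def)

lemma omega_diff_eq_integral:
  assumes nu: "nu > 0" and s: "s > 0"
  shows "omega mu s nu t c2 - omega mu s nu t c1
    = (\<integral>w. cond_rejection_prob mu s nu t c2 w - cond_rejection_prob mu s nu t c1 w \<partial>chi2_measure nu)"
  unfolding omega_eq_integral[OF nu s]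
  by (rule Bochner_Integration.integral_diff[symmetric]) (auto intro: integrable_cond_rejection_prob nu s)

lemma omega_mono:
  assumes nu: "nu > 0" and s: "s > 0" and "c1 \<le> c2"
  shows "omega mu s nu t c1 \<le> omega mu s nu t c2"
proof -
  have "0 \<le> (\<integral>w. cond_rejection_prob mu s nu t c2 w - cond_rejection_prob mu s nu t c1 w \<partial>chi2_measure nu)"
    using cond_rejection_prob_mono[OF s \<open>c1 \<le> c2\<close>] by (intro Bochner_Integration.integral_nonneg) auto
  then show ?thesis unfolding omega_diff_eq_integral[OF nu s, symmetric] by simp
qed

lemma omega_lipschitz:
  assumes nu: "nu > 0" and s: "s > 0" and "c1 \<le> c2"
  shows "omega mu s nu t c2 - omega mu s nu t c1 \<le> 2 / sqrt (2 * pi * s\<^sup>2) * (c2 - c1)"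
proof -
  interpret prob_space "chi2_measure nu" by (rule prob_space_chi2_measure[OF nu])
  have "(\<integral>w. cond_rejection_prob mu s nu t c2 w - cond_rejection_prob mu s nu t c1 w \<partial>chi2_measure nu)
      \<le> (\<integral>w. 2 / sqrt (2 * pi * s\<^sup>2) * (c2 - c1) \<partial>chi2_measure nu)"
    using cond_rejection_prob_lipschitz[OF s \<open>c1 \<le> c2\<close>]
    by (intro integral_mono) (auto intro!: Bochner_Integration.integrable_diff integrable_cond_rejection_prob nu s)
  then show ?thesis unfolding omega_diff_eq_integral[OF nu s] using prob_space by simp
qed

lemma omega_le_central_prob:
  assumes nu: "nu > 0" and s: "s > 0" and "t \<ge> 0"
  shows "omega mu s nu t c \<le> central_prob mu s c"
proof -
  interpret prob_space "chi2_measure nu" by (rule prob_space_chi2_measure[OF nu])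
  have "cond_rejection_prob mu s nu t c w \<le> central_prob mu s c" for w
    using assms central_prob_bounds[OF s, of mu c]
    by (auto simp: cond_rejection_prob_def intro!: monoD[OF mono_central_prob])
  then have "omega mu s nu t c \<le> (\<integral>w. central_prob mu s c \<partial>chi2_measure nu)"
    unfolding omega_eq_integral[OF nu s]
    by (intro integral_mono) (auto intro: integrable_cond_rejection_prob nu s)
  then show ?thesis using prob_space by simp
qed

text \<open>For \<open>w\<close> below \<open>\<delta>\<close> the half-width \<open>c\<^sub>2 - t s \<surd>(w/\<nu>)\<close> stays positive, and the chi-squared law
  charges every interval \<open>(0, \<delta>)\<close>.\<close>
lemma omega_strict_mono:
  assumes nu: "nu > 0" and s: "s > 0" and t: "t \<ge> 0" and "c1 < c2" "0 < c2"
  shows "omega mu s nu t c1 < omega mu s nu t c2"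
proof -
  interpret prob_space "chi2_measure nu" by (rule prob_space_chi2_measure[OF nu])
  define \<delta> where "\<delta> = nu * (c2 / (t * s + 1))\<^sup>2"
  have ts: "t * s \<ge> 0" using t s by simp
  have "t * s + 1 > 0" using ts by simp
  then have "\<delta> > 0" unfolding \<delta>_def using nu assms by (intro mult_pos_pos) auto
  have strict: "cond_rejection_prob mu s nu t c1 w < cond_rejection_prob mu s nu t c2 w"
    if w: "w \<in> {0<..<\<delta>}" for w
  proof -
    define T where "T = t * (s * sqrt (w / nu))"
    have "w / nu < (c2 / (t * s + 1))\<^sup>2" using w nu unfolding \<delta>_def by (simp add: field_simps)
    then have sq: "sqrt (w / nu) < c2 / (t * s + 1)"
      using assms ts by (metis real_sqrt_less_iff real_sqrt_abs abs_of_pos divide_pos_pos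
          add_nonneg_pos zero_less_one power2_eq_square)
    have "T = (t * s) * sqrt (w / nu)" unfolding T_def by simp
    also have "\<dots> \<le> (t * s) * (c2 / (t * s + 1))"
      using sq ts by (intro mult_left_mono) auto
    also have "\<dots> < c2" using assms \<open>t * s + 1 > 0\<close> by (simp add: field_simps)
    finally have "T < c2" .
    then have "central_prob mu s (c1 - T) < central_prob mu s (c2 - T)"
      using central_prob_strict_mono[OF s, of "max (c1 - T) 0" "c2 - T" mu] \<open>c1 < c2\<close>
      by (cases "c1 - T \<le> 0") (auto simp: central_prob_nonpos max_def)
    then show ?thesis unfolding cond_rejection_prob_def T_def using w by simp
  qed
  have "(\<integral>w. cond_rejection_prob mu s nu t c1 w \<partial>chi2_measure nu)
      < (\<integral>w. cond_rejection_prob mu s nu t c2 w \<partial>chi2_measure nu)"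
    using emeasure_chi2_measure_interval_pos[OF nu \<open>\<delta> > 0\<close>] strict
      cond_rejection_prob_mono[OF s less_imp_le[OF \<open>c1 < c2\<close>]]
    by (intro integral_less_AE[where A="{0<..<\<delta>}"] integrable_cond_rejection_prob nu s)
      (auto intro!: AE_I2 simp del: greaterThanLessThan_iff dest: less_imp_neq)
  then show ?thesis unfolding omega_eq_integral[OF nu s] .
qed

lemma ex_omega_gt:
  assumes nu: "nu > 0" and s: "s > 0" and "al < 1"
  shows "\<exists>n::nat. omega mu s nu t (real n) > al"
proof -
  interpret N: prob_space "normal_measure mu s" by (rule prob_space_normal_measure[OF s])
  interpret C: prob_space "chi2_measure nu" by (rule prob_space_chi2_measure[OF nu])
  interpret P: pair_prob_space "normal_measure mu s" "chi2_measure nu" ..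
  define A where "A n = rejection_region s nu t (real n)" for n :: nat
  have A_sets: "range A \<subseteq> sets (normal_measure mu s \<Otimes>\<^sub>M chi2_measure nu)"
    unfolding sets_normal_chi2_pair A_def using rejection_region_sets by auto
  have "incseq A" unfolding A_def incseq_def by (auto intro!: rejection_region_mono)
  have "(\<Union>n. A n) = UNIV \<times> {0<..}"
  proof (intro set_eqI iffI)
    fix z :: "real \<times> real"
    assume "z \<in> UNIV \<times> {0<..}"
    moreover obtain n :: nat where "\<bar>fst z\<bar> + t * (s * sqrt (snd z / nu)) < real n"
      using reals_Archimedean2 by blast
    ultimately have "z \<in> A n" unfolding A_def rejection_region_def by auto
    then show "z \<in> (\<Union>n. A n)" by blast
  qed (auto simp: A_def rejection_region_def)
  moreover have "emeasure (normal_measure mu s \<Otimes>\<^sub>M chi2_measure nu) (UNIV \<times> {0<..}) = 1"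
    using prob_chi2_measure_pos[OF nu] N.emeasure_space_1
    by (simp add: C.emeasure_pair_measure_Times C.emeasure_eq_measure)
  ultimately have "measure (normal_measure mu s \<Otimes>\<^sub>M chi2_measure nu) (\<Union>n. A n) = 1"
    by (simp add: measure_def)
  then have "(\<lambda>n. measure (normal_measure mu s \<Otimes>\<^sub>M chi2_measure nu) (A n)) \<longlonglongrightarrow> 1"
    using P.finite_Lim_measure_incseq[OF A_sets \<open>incseq A\<close>] by simp
  then have "eventually (\<lambda>n. al < measure (normal_measure mu s \<Otimes>\<^sub>M chi2_measure nu) (A n)) sequentially"
    using \<open>al < 1\<close> by (rule order_tendstoD(1))
  then obtain n where "al < measure (normal_measure mu s \<Otimes>\<^sub>M chi2_measure nu) (A n)"
    by (auto simp: eventually_sequentially)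
  then show ?thesis unfolding A_def omega_eq_pair_measure[OF nu, symmetric] by blast
qed

lemma ex1_omega_eq:
  assumes nu: "nu > 0" and s: "s > 0" and t: "t \<ge> 0" and "0 < al" "al < 1"
  shows "\<exists>!c. c > 0 \<and> omega mu s nu t c = al"
proof -
  define L where "L = 2 / sqrt (2 * pi * s\<^sup>2)"
  have "L > 0" unfolding L_def using s by simp
  define c1 where "c1 = al / (2 * L)"
  have "c1 > 0" unfolding c1_def using \<open>L > 0\<close> assms by simp
  have "omega mu s nu t c1 \<le> central_prob mu s c1 - central_prob mu s 0"
    using omega_le_central_prob[OF nu s t] by (simp add: central_prob_nonpos)
  also have "\<dots> \<le> L * c1"
    unfolding L_def using central_prob_lipschitz[OF s, of 0 c1 mu] \<open>c1 > 0\<close> by simp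
  also have "\<dots> < al" unfolding c1_def using \<open>L > 0\<close> assms by simp
  finally have below: "omega mu s nu t c1 < al" .
  obtain n :: nat where above: "omega mu s nu t (real n) > al"
    using ex_omega_gt[OF nu s \<open>al < 1\<close>] by blast
  have "c1 \<le> real n"
    using omega_mono[OF nu s, of "real n" c1 mu t] below above by linarith
  have "\<bar>omega mu s nu t x - omega mu s nu t y\<bar> \<le> L * \<bar>x - y\<bar>" for x y
  proof (cases "x \<le> y")
    case True
    then show ?thesis
      using omega_lipschitz[OF nu s True] omega_mono[OF nu s True, of mu t] unfolding L_def by simp
  next
    case False
    then have "y \<le> x" by simp
    then show ?thesis
      using omega_lipschitz[OF nu s \<open>y \<le> x\<close>] omega_mono[OF nu s \<open>y \<le> x\<close>, of mu t] False
      unfolding L_def by simp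
  qed
  then have "L-lipschitz_on {c1..real n} (omega mu s nu t)"
    using \<open>L > 0\<close> by (intro lipschitz_onI) (auto simp: dist_real_def)
  then have "continuous_on {c1..real n} (omega mu s nu t)"
    by (rule lipschitz_on_continuous_on)
  then obtain c where c: "c1 \<le> c" "c \<le> real n" "omega mu s nu t c = al"
    using IVT'[of "omega mu s nu t" c1 al "real n"] below above \<open>c1 \<le> real n\<close> by auto
  show ?thesis
  proof (rule ex1I[where a=c])
    show "c > 0 \<and> omega mu s nu t c = al" using c \<open>c1 > 0\<close> by simp
  next
    fix c' assume c': "c' > 0 \<and> omega mu s nu t c' = al"
    show "c' = c"
      using omega_strict_mono[OF nu s t, of c' c mu] omega_strict_mono[OF nu s t, of c c' mu]
        c c' \<open>c1 > 0\<close> by (cases c' c rule: linorder_cases) auto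
  qed
qed

lemma crit_pos_omega_crit:
  assumes "nu > 0" and "s > 0" and "t \<ge> 0" and "0 < al" "al < 1"
  shows "crit mu s al nu t > 0 \<and> omega mu s nu t (crit mu s al nu t) = al"
  unfolding crit_def by (rule theI'[OF ex1_omega_eq[OF assms]])

section \<open>Monotone likelihood ratio of the folded normal law\<close>

text \<open>Total positivity of the kernel \<open>cosh(xy)\<close>: after the product formula
  \<open>2 cosh u cosh v = cosh(u + v) + cosh(u - v)\<close> both sides compare termwise.\<close>
lemma cosh_mult_cosh_le:
  fixes x y a b :: real
  assumes "0 \<le> x" "x \<le> y" "\<bar>a\<bar> \<le> b"
  shows "cosh (y * a) * cosh (x * b) \<le> cosh (x * a) * cosh (y * b)"
proof -
  have prod: "2 * (cosh u * cosh v) = cosh (u + v) + cosh (u - v)" for u v :: real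
    by (simp add: cosh_add cosh_diff)
  have "(y - x) * (b - a) \<ge> 0" "(x + y) * (a + b) \<ge> 0" "(x + y) * (b - a) \<ge> 0" "(y - x) * (b + a) \<ge> 0"
    using assms by (auto intro!: mult_nonneg_nonneg)
  then have "\<bar>y * a + x * b\<bar> \<le> \<bar>x * a + y * b\<bar>" "\<bar>y * a - x * b\<bar> \<le> \<bar>x * a - y * b\<bar>"
    by (auto simp: abs_le_iff algebra_simps)
  then have "cosh (y * a + x * b) \<le> cosh (x * a + y * b)" "cosh (y * a - x * b) \<le> cosh (x * a - y * b)"
    by (metis cosh_real_abs cosh_real_nonneg_le_iff abs_ge_zero)+
  then have "2 * (cosh (y * a) * cosh (x * b)) \<le> 2 * (cosh (x * a) * cosh (y * b))"
    unfolding prod by linarith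
  then show ?thesis by simp
qed

text \<open>The density of \<open>|X|\<close> for \<open>X \<sim> N(\<mu>, s\<^sup>2)\<close>, extended evenly to the whole line.\<close>
definition folded_normal_density :: "real \<Rightarrow> real \<Rightarrow> real \<Rightarrow> real" where
  "folded_normal_density mu s x = normal_density mu s x + normal_density (- mu) s x"

lemma folded_normal_density_abs: "folded_normal_density mu s \<bar>x\<bar> = folded_normal_density mu s x"
  by (cases "x \<ge> 0") (auto simp: folded_normal_density_def normal_density_reflect)

lemma folded_normal_density_pos: "s > 0 \<Longrightarrow> folded_normal_density mu s x > 0"
  unfolding folded_normal_density_def by (simp add: normal_density_pos add_pos_pos)

lemma folded_normal_density_eq_cosh:
  assumes s: "s > 0"
  shows "folded_normal_density mu s x
    = 2 / sqrt (2 * pi * s\<^sup>2) * exp (- (x\<^sup>2 + mu\<^sup>2) / (2 * s\<^sup>2)) * cosh (x * (mu / s\<^sup>2))"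
proof -
  have split: "exp (- (x - m)\<^sup>2 / (2 * s\<^sup>2)) = exp (- (x\<^sup>2 + m\<^sup>2) / (2 * s\<^sup>2)) * exp (x * (m / s\<^sup>2))"
    for m
  proof -
    have "- (x - m)\<^sup>2 / (2 * s\<^sup>2) = - (x\<^sup>2 + m\<^sup>2) / (2 * s\<^sup>2) + x * (m / s\<^sup>2)"
      using s by (simp add: field_simps power2_eq_square)
    then show ?thesis by (simp add: exp_add)
  qed
  show ?thesis
    unfolding folded_normal_density_def normal_density_def split cosh_field_def
    using s by (simp add: field_simps)
qed

lemma folded_normal_density_ratio_antimono:
  assumes s: "s > 0" and "0 \<le> x" "x \<le> y" and "\<bar>th\<bar> \<le> c"
  shows "folded_normal_density th s y * folded_normal_density c s x
           \<le> folded_normal_density th s x * folded_normal_density c s y"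
proof -
  define P where "P = (2 / sqrt (2 * pi * s\<^sup>2))\<^sup>2 * exp (- (x\<^sup>2 + y\<^sup>2 + th\<^sup>2 + c\<^sup>2) / (2 * s\<^sup>2))"
  have exp_sum: "exp (- (u\<^sup>2 + th\<^sup>2) / (2 * s\<^sup>2)) * exp (- (v\<^sup>2 + c\<^sup>2) / (2 * s\<^sup>2))
      = exp (- (x\<^sup>2 + y\<^sup>2 + th\<^sup>2 + c\<^sup>2) / (2 * s\<^sup>2))" if "{u, v} = {x, y}" for u v
    using that by (auto simp: exp_add[symmetric] add_divide_distrib[symmetric] doubleton_eq_iff
        intro!: arg_cong[where f=exp])
  have "\<bar>th / s\<^sup>2\<bar> \<le> c / s\<^sup>2" using assms by (simp add: divide_right_mono)
  then have "P * (cosh (y * (th / s\<^sup>2)) * cosh (x * (c / s\<^sup>2)))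
      \<le> P * (cosh (x * (th / s\<^sup>2)) * cosh (y * (c / s\<^sup>2)))"
    using assms by (intro mult_left_mono cosh_mult_cosh_le) (auto simp: P_def)
  moreover have "folded_normal_density th s y * folded_normal_density c s x
      = P * (cosh (y * (th / s\<^sup>2)) * cosh (x * (c / s\<^sup>2)))"
    using exp_sum[of y x] unfolding folded_normal_density_eq_cosh[OF s] P_def
    by (simp add: power2_eq_square insert_commute ac_simps)
  moreover have "folded_normal_density th s x * folded_normal_density c s y
      = P * (cosh (x * (th / s\<^sup>2)) * cosh (y * (c / s\<^sup>2)))"
    using exp_sum[of x y] unfolding folded_normal_density_eq_cosh[OF s] P_def
    by (simp add: power2_eq_square)
  ultimately show ?thesis by simp
qed

section \<open>The Neyman-Pearson step\<close>

lemma integrable_folded_normal_density_indicator: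
  "s > 0 \<Longrightarrow> A \<in> sets borel \<Longrightarrow> integrable lborel (\<lambda>x. folded_normal_density mu s x * indicator A x)"
  unfolding folded_normal_density_def distrib_right
  by (intro Bochner_Integration.integrable_add integrable_normal_density_indicator)

lemma central_prob_eq_folded_integral:
  assumes s: "s > 0"
  shows "2 * central_prob mu s a = (\<integral>x. folded_normal_density mu s x * indicator {-a<..<a} x \<partial>lborel)"
proof -
  have "(\<integral>x. folded_normal_density mu s x * indicator {-a<..<a} x \<partial>lborel)
      = (\<integral>x. normal_density mu s x * indicator {-a<..<a} x
             + normal_density (- mu) s x * indicator {-a<..<a} x \<partial>lborel)"
    unfolding folded_normal_density_def by (simp add: distrib_right)
  also have "\<dots> = central_prob mu s a + central_prob (- mu) s a"
    unfolding central_prob_eq_integral[OF s]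
    by (rule Bochner_Integration.integral_add) (auto intro: integrable_normal_density_indicator s)
  finally show ?thesis using central_prob_reflect[OF s] by simp
qed

text \<open>With \<open>k\<close> the likelihood ratio at \<open>a\<^sub>0\<close>, the difference of folded densities \<open>\<psi>\<^sub>\<theta> - k \<psi>\<^sub>c\<close> is
  nonnegative for \<open>|x| < a\<^sub>0\<close> and nonpositive beyond, so \<open>(-a\<^sub>0, a\<^sub>0)\<close> maximises its integral among
  centred intervals.\<close>
lemma central_prob_lagrangian_le:
  assumes s: "s > 0" and th: "\<bar>th\<bar> \<le> c" and "a0 \<ge> 0"
  defines "k \<equiv> folded_normal_density th s a0 / folded_normal_density c s a0"
  shows "central_prob th s a - k * central_prob c s a \<le> central_prob th s a0 - k * central_prob c s a0"
proof -
  define I where "I b x = (indicator {-b<..<b} x :: real)" for b x :: real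
  define D where "D x = folded_normal_density th s x - k * folded_normal_density c s x" for x
  have psi_c: "folded_normal_density c s a0 > 0" by (rule folded_normal_density_pos[OF s])
  have D_sign: "D x * (I a x - I a0 x) \<le> 0" for x
  proof (cases "\<bar>x\<bar> < a0")
    case True
    then have "folded_normal_density th s a0 * folded_normal_density c s x
             \<le> folded_normal_density th s x * folded_normal_density c s a0"
      using folded_normal_density_ratio_antimono[OF s _ _ th, of "\<bar>x\<bar>" a0]
      by (simp add: folded_normal_density_abs)
    then have "D x \<ge> 0" using psi_c by (simp add: D_def k_def field_simps)
    then show ?thesis using True by (auto simp: I_def indicator_def mult_le_0_iff)
  next
    case False
    then have "folded_normal_density th s x * folded_normal_density c s a0
             \<le> folded_normal_density th s a0 * folded_normal_density c s x"
      using folded_normal_density_ratio_antimono[OF s \<open>a0 \<ge> 0\<close> _ th, of "\<bar>x\<bar>"]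
      by (simp add: folded_normal_density_abs)
    then have "D x \<le> 0" using psi_c by (simp add: D_def k_def field_simps)
    then show ?thesis using False by (auto simp: I_def indicator_def mult_le_0_iff)
  qed
  have int_psi: "integrable lborel (\<lambda>x. folded_normal_density mu s x * I b x)" for mu b
    unfolding I_def by (rule integrable_folded_normal_density_indicator[OF s]) simp
  have DI: "D x * I b x = folded_normal_density th s x * I b x - k * (folded_normal_density c s x * I b x)"
    for x b
    unfolding D_def by (simp add: algebra_simps)
  have int_D: "integrable lborel (\<lambda>x. D x * I b x)" for b
    unfolding DI by (intro Bochner_Integration.integrable_diff integrable_mult_right int_psi)
  have integral_D: "(\<integral>x. D x * I b x \<partial>lborel) = 2 * central_prob th s b - k * (2 * central_prob c s b)"
    for b
  proof -
    have "(\<integral>x. D x * I b x \<partial>lborel)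
        = (\<integral>x. folded_normal_density th s x * I b x - k * (folded_normal_density c s x * I b x) \<partial>lborel)"
      by (simp only: DI)
    also have "\<dots> = (\<integral>x. folded_normal_density th s x * I b x \<partial>lborel)
                     - k * (\<integral>x. folded_normal_density c s x * I b x \<partial>lborel)"
      by (subst Bochner_Integration.integral_diff) (auto intro!: int_psi integrable_mult_right)
    finally show ?thesis unfolding I_def central_prob_eq_folded_integral[OF s] .
  qed
  have "(\<integral>x. D x * I a x \<partial>lborel) - (\<integral>x. D x * I a0 x \<partial>lborel) = (\<integral>x. D x * (I a x - I a0 x) \<partial>lborel)"
    unfolding right_diff_distrib by (rule Bochner_Integration.integral_diff[OF int_D int_D, symmetric])
  also have "\<dots> \<le> 0"
  proof -
    have "0 \<le> (\<integral>x. - (D x * (I a x - I a0 x)) \<partial>lborel)"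
      by (rule Bochner_Integration.integral_nonneg) (use D_sign in auto)
    then show ?thesis by simp
  qed
  finally show ?thesis unfolding integral_D by (simp add: algebra_simps)
qed

lemma omega_lagrangian_le:
  assumes nu: "nu > 0" and s: "s > 0" and th: "\<bar>th\<bar> \<le> c0" and "a0 \<ge> 0"
  defines "k \<equiv> folded_normal_density th s a0 / folded_normal_density c0 s a0"
  shows "omega th s nu t c - k * omega c0 s nu t c \<le> central_prob th s a0 - k * central_prob c0 s a0"
proof -
  interpret prob_space "chi2_measure nu" by (rule prob_space_chi2_measure[OF nu])
  have "cond_rejection_prob th s nu t c w - k * cond_rejection_prob c0 s nu t c w
      \<le> central_prob th s a0 - k * central_prob c0 s a0" for w
    using central_prob_lagrangian_le[OF s th \<open>a0 \<ge> 0\<close>, of "c - t * (s * sqrt (w / nu))"]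
      central_prob_lagrangian_le[OF s th \<open>a0 \<ge> 0\<close>, of 0]
    by (auto simp: cond_rejection_prob_def central_prob_nonpos k_def)
  then have "(\<integral>w. cond_rejection_prob th s nu t c w - k * cond_rejection_prob c0 s nu t c w \<partial>chi2_measure nu)
      \<le> (\<integral>w. central_prob th s a0 - k * central_prob c0 s a0 \<partial>chi2_measure nu)"
    by (intro integral_mono)
      (auto intro!: Bochner_Integration.integrable_diff integrable_mult_right
        integrable_cond_rejection_prob nu s)
  then show ?thesis
    unfolding omega_eq_integral[OF nu s]
    using prob_space by (subst (asm) Bochner_Integration.integral_diff)
      (auto intro!: integrable_mult_right integrable_cond_rejection_prob nu s)
qed

theorem theorem1:
  fixes c0 alpha0 nu2 sigma1 t theta :: real
  assumes "c0 > 0" and "0 < alpha0" and "alpha0 < 1/2" and "nu2 > 0" and "sigma1 > 0"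
    and "t > 0" and "- c0 < theta" and "theta < c0"
  shows "omega theta sigma1 nu2 t (crit c0 sigma1 alpha0 nu2 t)
           \<le> omega theta sigma1 nu2 0 (crit c0 sigma1 alpha0 nu2 0)"
proof -
  note nu = \<open>nu2 > 0\<close> and s = \<open>sigma1 > 0\<close>
  have alpha: "0 < alpha0" "alpha0 < 1" using assms by auto
  define a0 where "a0 = crit c0 sigma1 alpha0 nu2 0"
  define ct where "ct = crit c0 sigma1 alpha0 nu2 t"
  define k where "k = folded_normal_density theta sigma1 a0 / folded_normal_density c0 sigma1 a0"
  have "a0 > 0" and size0: "central_prob c0 sigma1 a0 = alpha0"
    using crit_pos_omega_crit[OF nu s order_refl alpha, of c0]
    unfolding a0_def omega_zero_scale[OF nu s] by auto
  have size_t: "omega c0 sigma1 nu2 t ct = alpha0"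
    using crit_pos_omega_crit[OF nu s _ alpha, of t c0] \<open>t > 0\<close> unfolding ct_def by auto
  have "omega theta sigma1 nu2 t ct - k * alpha0 \<le> central_prob theta sigma1 a0 - k * alpha0"
    using omega_lagrangian_le[OF nu s _ less_imp_le[OF \<open>a0 > 0\<close>], of theta c0 t ct] assms
    unfolding k_def size_t size0 by auto
  then show ?thesis
    unfolding ct_def a0_def omega_zero_scale[OF nu s] by simp
qed

end
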